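(* In the setting below, suppose there exist $K\ge 0$ and $R>0$ such that $\mathbb{P}_X(S_r)\le K\,\mathbb{P}_X(B_r)$ for all $r\in(0,R)$. If $x$ is a Lebesgue point for $\eta$ with respect to $\mathbb{P}_X$, then $\mathbb{E}[|\eta(X^x_m)-\eta(x)|]\to 0$ as $m\to\infty$, for any choice of nearest neighbors $X^x_m$ (any tie-breaking).
   Context: Let $(\mathcal{X},d)$ be a metric space with its Borel $\sigma$-algebra, let $(\Omega,\mathcal{F},\mathbb{P})$ be a probability space, and let $X,X_1,X_2,\dots$ be i.i.d. $\mathcal{X}$-valued random variables with common law $\mathbb{P}_X$. For $x\in\mathcal{X}$ and $r>0$ write $B_r=\{x':d(x,x')<r\}$, $\bar B_r=\{x':d(x,x')\le r\}$ and $S_r=\{x':d(x,x')=r\}$. The support of $\mathbb{P}_X$ is the set of $x$ such that $\mathbb{P}_X(\bar B_r(x))>0$ for all $r>0$. Fix $x$ in the support of $\mathbb{P}_X$ and a bounded measurable $\eta:\mathcal{X}\to\mathbb{R}$. For each $m\in\mathbb{N}$, a nearest neighbor of $x$ among $X_1,\dots,X_m$ is a measurable $X^x_m:\Omega\to\mathcal{X}$ with $X^x_m(\omega)\in\arg\min_{x'\in\{X_1(\omega),\dots,X_m(\omega)\}}d(x,x')$ for every $\omega\in\Omega$; fix such a sequence $(X^x_m)_{m\in\mathbb{N}}$. The point $x$ is a Lebesgue point if $\mathbb{E}[\mathbb{I}_{\bar B_r}(X)\,|\eta(X)-\eta(x)|]/\mathbb{P}_X(\bar B_r)\to 0$ as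 $r\to 0^+$. *)

theory Defs
  imports "HOL-Probability.Probability"
begin

definition in_support :: "'a::metric_space measure \<Rightarrow> 'a \<Rightarrow> bool" where
  "in_support P x \<longleftrightarrow> (\<forall>r>0. measure P (cball x r) > 0)"

definition lebesgue_point ::
  "'w measure \<Rightarrow> ('w \<Rightarrow> 'a::metric_space) \<Rightarrow> ('a \<Rightarrow> real) \<Rightarrow> 'a \<Rightarrow> bool" where
  "lebesgue_point M X \<eta> x \<longleftrightarrow>
     ((\<lambda>r. (\<integral>\<omega>. indicator (cball x r) (X \<omega>) * \<bar>\<eta> (X \<omega>) - \<eta> x\<bar> \<partial>M)
            / measure (distr M borel X) (cball x r)) \<longlongrightarrow> 0) (at_right 0)"

definition is_nearest_neighbor ::
  "'w measure \<Rightarrow> (nat \<Rightarrow> 'w \<Rightarrow> 'a::metric_space) \<Rightarrow> 'a \<Rightarrow> nat \<Rightarrow> ('w \<Rightarrow> 'a) \<Rightarrow> bool" where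
  "is_nearest_neighbor M Xs x m N \<longleftrightarrow>
     N \<in> borel_measurable M \<and>
     (\<forall>\<omega>\<in>space M. (\<exists>i\<in>{1..m}. N \<omega> = Xs i \<omega>) \<and>
                    (\<forall>i\<in>{1..m}. dist x (N \<omega>) \<le> dist x (Xs i \<omega>)))"

end

theory Submission
  imports Defs
begin

text \<open>Write h = |\<eta> - \<eta> x| and let T_i be the distance from x to the nearest of the sample
  points other than X_i. A nearest neighbour is some X_i with d(x, X_i) \<le> T_i, so
  h(X^x_m) \<le> \<Sum>_i h(X_i) 1[d(x, X_i) \<le> T_i]. As X_i is independent of T_i, the i-th term has
  expectation E[g(T_i)] with g(t) = E[h(X) 1[d(x, X) \<le> t]]. At a Lebesgue point
  g(t) \<le> \<epsilon> P(cball x t) for small t, and the sphere condition gives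
  P(cball x t) \<le> (1 + K) P(ball x t) for t < R. Now E[P(ball x T_i)] = P(d(x, X_i) < T_i), and these
  probabilities sum to at most 1 because at most one sample point is strictly nearest. What is
  left are the events T_i \<ge> R and T_i > r, of probability q^(m-1) for some q < 1 since x lies in
  the support; their total contribution m q^(m-1) vanishes.\<close>

lemma (in prob_space) integral_indep_var:
  assumes indep: "indep_var S X T Y"
    and f: "f \<in> borel_measurable (S \<Otimes>\<^sub>M T)" and bnd: "\<And>z. \<bar>f z\<bar> \<le> (c::real)"
  shows "(\<integral>\<omega>. f (X \<omega>, Y \<omega>) \<partial>M) = (\<integral>\<omega>. (\<integral>\<omega>'. f (X \<omega>', Y \<omega>) \<partial>M) \<partial>M)"
proof -
  have X[measurable]: "random_variable S X" and Y[measurable]: "random_variable T Y"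
    using indep by (blast dest: indep_var_rv1 indep_var_rv2)+
  interpret PX: prob_space "distr M S X" by (rule prob_space_distr) (rule X)
  interpret PY: prob_space "distr M T Y" by (rule prob_space_distr) (rule Y)
  interpret PXY: pair_prob_space "distr M S X" "distr M T Y" ..
  have f': "f \<in> borel_measurable (distr M S X \<Otimes>\<^sub>M distr M T Y)"
    using f by (simp cong: measurable_cong_sets)
  have "(\<integral>\<omega>. f (X \<omega>, Y \<omega>) \<partial>M) = integral\<^sup>L (distr M (S \<Otimes>\<^sub>M T) (\<lambda>\<omega>. (X \<omega>, Y \<omega>))) f"
    by (rule integral_distr[symmetric]) (auto intro: f)
  also have "\<dots> = integral\<^sup>L (distr M S X \<Otimes>\<^sub>M distr M T Y) f"
    using indep by (simp add: indep_var_distribution_eq)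
  also have "\<dots> = (\<integral>t. (\<integral>s. f (s, t) \<partial>distr M S X) \<partial>distr M T Y)"
  proof -
    have "integrable (distr M S X \<Otimes>\<^sub>M distr M T Y) (\<lambda>(s, t). f (s, t))"
      using bnd f' by (intro PXY.P.integrable_const_bound[where B=c]) auto
    from PXY.integral_snd[OF this] show ?thesis by (simp add: case_prod_beta')
  qed
  also have "\<dots> = (\<integral>\<omega>. (\<integral>s. f (s, Y \<omega>) \<partial>distr M S X) \<partial>M)"
  proof (rule integral_distr[OF Y])
    have "(\<lambda>(t, s). f (s, t)) \<in> borel_measurable (T \<Otimes>\<^sub>M distr M S X)"
      using f by (simp cong: measurable_cong_sets)
    then show "(\<lambda>t. \<integral>s. f (s, t) \<partial>distr M S X) \<in> borel_measurable T"
      by (rule PX.borel_measurable_lebesgue_integral)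
  qed
  also have "\<dots> = (\<integral>\<omega>. (\<integral>\<omega>'. f (X \<omega>', Y \<omega>) \<partial>M) \<partial>M)"
    by (intro Bochner_Integration.integral_cong refl integral_distr X)
      (auto intro!: measurable_compose[OF _ f] measurable_Pair measurable_space[OF Y])
  finally show ?thesis .
qed

lemma (in finite_measure) integrable_bounded_real:
  "f \<in> borel_measurable M \<Longrightarrow> (\<And>y. \<bar>f y\<bar> \<le> (c::real)) \<Longrightarrow> integrable M f"
  by (rule integrable_const_bound[where B=c]) auto

lemma sphere_in_borel[measurable]: "sphere (x::'a::metric_space) r \<in> sets borel"
  unfolding sphere_def by (intro borel_closed closed_Collect_eq continuous_intros)

lemma cball_in_borel[measurable]: "cball (x::'a::metric_space) r \<in> sets borel"
  by (intro borel_closed closed_cball)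

lemma in_support_measure_outside_ball_less_1:
  assumes "prob_space P" "sets P = sets borel" "in_support P x" "0 < r"
  shows "measure P {y. r \<le> dist x y} < 1"
proof -
  interpret prob_space P by fact
  have space: "space P = UNIV"
    using sets_eq_imp_space_eq[OF assms(2)] by simp
  have "{y. r \<le> dist x y} = space P - ball x r"
    by (auto simp: space)
  then have "measure P {y. r \<le> dist x y} = 1 - measure P (ball x r)"
    using prob_compl[of "ball x r"] assms(2) by simp
  moreover have "measure P (cball x (r/2)) \<le> measure P (ball x r)"
    using assms(2,4) by (intro finite_measure_mono) auto
  moreover have "0 < measure P (cball x (r/2))"
    using assms(3,4) by (simp add: in_support_def)
  ultimately show ?thesis by simp
qed

lemma real_times_power_tendsto_zero:
  assumes "0 \<le> q" "q < (1::real)"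
  shows "(\<lambda>m. real m * q ^ (m - 1)) \<longlonglongrightarrow> 0"
proof -
  have "(\<lambda>n. real n * q ^ n + q ^ n) \<longlonglongrightarrow> 0 + 0"
    using assms by (intro tendsto_add powser_times_n_limit_0 LIMSEQ_power_zero) simp_all
  then have "(\<lambda>n. real (Suc n) * q ^ (Suc n - 1)) \<longlonglongrightarrow> 0"
    by (simp add: algebra_simps)
  then show ?thesis by (rule LIMSEQ_imp_Suc)
qed

locale nn_sample = prob_space M for M :: "'w measure" +
  fixes Xs :: "nat \<Rightarrow> 'w \<Rightarrow> 'a::metric_space" and \<eta> :: "'a \<Rightarrow> real" and x :: 'a
  assumes Xs_measurable[measurable]: "\<And>i. Xs i \<in> borel_measurable M"
    and indep_Xs: "indep_vars (\<lambda>_. borel) Xs UNIV"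
    and distr_Xs_eq: "\<And>i. distr M borel (Xs i) = distr M borel (Xs 0)"
    and \<eta>_measurable[measurable]: "\<eta> \<in> borel_measurable borel"
    and bounded_\<eta>: "bounded (range \<eta>)"
begin

definition "P = distr M borel (Xs 0)"
definition "dev y = \<bar>\<eta> y - \<eta> x\<bar>"
definition "dev_bound = (SUP y. dev y)"
text \<open>For m = 1 this is a minimum over the empty set, hence unspecified; the lemmas about it
  assume 2 \<le> m where that matters.\<close>
definition "min_dist_others m i \<omega> = (MIN j\<in>{1..m} - {i}. dist x (Xs j \<omega>))"
definition "ball_prob t = measure P (ball x t)"
definition "cball_prob t = measure P (cball x t)"
definition "cball_dev t = (\<integral>y. (if dist x y \<le> t then dev y else 0) \<partial>P)"

sublocale law: prob_space P
  unfolding P_def by (rule prob_space_distr) simp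

lemma sets_P[simp]: "sets P = sets borel" and space_P[simp]: "space P = UNIV"
  by (simp_all add: P_def)

lemma measurable_P_eq[simp]: "measurable P N = measurable borel N"
  by (rule measurable_cong_sets) simp_all

lemma distr_Xs: "distr M borel (Xs i) = P"
  using distr_Xs_eq by (simp add: P_def)

lemma dev_measurable[measurable]: "dev \<in> borel_measurable borel"
  unfolding dev_def by measurable

lemma dev_nonneg: "0 \<le> dev y"
  by (simp add: dev_def)

lemma dev_center[simp]: "dev x = 0"
  by (simp add: dev_def)

lemma dev_le_bound: "dev y \<le> dev_bound"
proof -
  obtain B where B: "\<And>y. \<bar>\<eta> y\<bar> \<le> B"
    using bounded_\<eta> unfolding bounded_iff by auto
  have "dev z \<le> 2 * B" for z
    using B[of z] B[of x] by (simp add: dev_def)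
  then have "bdd_above (range dev)"
    by (intro bdd_aboveI[where M="2 * B"]) auto
  then show ?thesis
    unfolding dev_bound_def by (intro cSUP_upper) simp_all
qed

lemma dev_bound_nonneg: "0 \<le> dev_bound"
  using dev_nonneg[of x] dev_le_bound[of x] by simp

lemma dist_center_measurable[measurable]: "(\<lambda>y. dist x y) \<in> borel_measurable borel"
  by (intro borel_measurable_continuous_onI continuous_intros)

lemma min_dist_others_measurable[measurable]: "min_dist_others m i \<in> borel_measurable M"
  unfolding min_dist_others_def by measurable

text \<open>min_dist_others m i is a function of the sample points other than Xs i, hence independent
  of Xs i.\<close>
lemma integral_Xs_min_dist_others:
  assumes i: "i \<in> {1..m}"
    and \<psi>[measurable]: "\<psi> \<in> borel_measurable (borel \<Otimes>\<^sub>M borel)"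
    and bnd: "\<And>z. \<bar>\<psi> z\<bar> \<le> (c::real)"
  shows "(\<integral>\<omega>. \<psi> (Xs i \<omega>, min_dist_others m i \<omega>) \<partial>M)
       = (\<integral>\<omega>. (\<integral>y. \<psi> (y, min_dist_others m i \<omega>) \<partial>P) \<partial>M)"
proof -
  define J where "J = {1..m} - {i}"
  define min_dist where "min_dist v = (MIN j\<in>J. dist x (v j))" for v :: "nat \<Rightarrow> 'a"
  define XI where "XI \<omega> = restrict (\<lambda>j. Xs j \<omega>) {i}" for \<omega>
  define XJ where "XJ \<omega> = restrict (\<lambda>j. Xs j \<omega>) J" for \<omega>
  have indep: "indep_var (PiM {i} (\<lambda>_. borel)) XI (PiM J (\<lambda>_. borel)) XJ"
    unfolding XI_def XJ_def using i by (intro indep_var_restrict[OF indep_Xs]) (auto simp: J_def)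
  have "(\<lambda>v. v i) \<in> measurable (PiM {i} (\<lambda>_. borel)) borel"
    by (rule measurable_component_singleton) simp
  moreover have "min_dist \<in> borel_measurable (PiM J (\<lambda>_. borel))"
    unfolding min_dist_def J_def
    by (intro borel_measurable_Min measurable_compose[OF _ dist_center_measurable]
        measurable_component_singleton) auto
  ultimately have "(\<lambda>(u, v). \<psi> (u i, min_dist v))
      \<in> borel_measurable (PiM {i} (\<lambda>_. borel) \<Otimes>\<^sub>M PiM J (\<lambda>_. borel))"
    by measurable
  moreover have "\<bar>(\<lambda>(u, v). \<psi> (u i, min_dist v)) z\<bar> \<le> c" for z
    using bnd by (simp add: split_beta)
  ultimately have split:
    "(\<integral>\<omega>. \<psi> (XI \<omega> i, min_dist (XJ \<omega>)) \<partial>M)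
      = (\<integral>\<omega>. (\<integral>\<omega>'. \<psi> (XI \<omega>' i, min_dist (XJ \<omega>)) \<partial>M) \<partial>M)"
    using integral_indep_var[OF indep, of "\<lambda>(u, v). \<psi> (u i, min_dist v)" c] by simp
  have XI: "XI \<omega> i = Xs i \<omega>" and XJ: "min_dist (XJ \<omega>) = min_dist_others m i \<omega>" for \<omega>
    by (auto simp: XI_def XJ_def min_dist_def min_dist_others_def J_def
        intro!: arg_cong[where f=Min] image_cong)
  have "(\<integral>\<omega>'. \<psi> (Xs i \<omega>', t) \<partial>M) = (\<integral>y. \<psi> (y, t) \<partial>P)" for t
    by (subst distr_Xs[symmetric, of i], rule integral_distr[symmetric]) measurable
  with split show ?thesis
    by (simp add: XI XJ)
qed

lemma prob_Xs_in:
  "A \<in> sets borel \<Longrightarrow> prob (Xs i -` A \<inter> space M) = measure P A"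
  using measure_distr[of "Xs i" M borel A] by (simp add: distr_Xs)

lemma prob_all_Xs_in:
  assumes "finite J" "J \<noteq> {}" and A: "A \<in> sets borel"
  shows "prob {\<omega>\<in>space M. \<forall>j\<in>J. Xs j \<omega> \<in> A} = measure P A ^ card J"
proof -
  have "{\<omega>\<in>space M. \<forall>j\<in>J. Xs j \<omega> \<in> A} = (\<Inter>j\<in>J. Xs j -` A \<inter> space M)"
    using assms by auto
  also have "prob \<dots> = (\<Prod>j\<in>J. prob (Xs j -` A \<inter> space M))"
    using assms by (intro indep_varsD[OF indep_Xs]) auto
  finally show ?thesis
    using A by (simp add: prob_Xs_in)
qed

lemma prob_min_dist_others:
  assumes "i \<in> {1..m}" "2 \<le> m"
  shows "prob {\<omega>\<in>space M. R \<le> min_dist_others m i \<omega>} = measure P {y. R \<le> dist x y} ^ (m - 1)"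
    and "prob {\<omega>\<in>space M. R < min_dist_others m i \<omega>} = measure P {y. R < dist x y} ^ (m - 1)"
proof -
  have "(if i = 1 then 2 else 1) \<in> {1..m} - {i}"
    using assms by auto
  then have J: "finite ({1..m} - {i})" "{1..m} - {i} \<noteq> {}" "card ({1..m} - {i}) = m - 1"
    using assms by (auto simp: card_Diff_singleton)
  show "prob {\<omega>\<in>space M. R \<le> min_dist_others m i \<omega>} = measure P {y. R \<le> dist x y} ^ (m - 1)"
    using prob_all_Xs_in[OF J(1,2), of "{y. R \<le> dist x y}"] J
    by (simp add: min_dist_others_def)
  show "prob {\<omega>\<in>space M. R < min_dist_others m i \<omega>} = measure P {y. R < dist x y} ^ (m - 1)"
    using prob_all_Xs_in[OF J(1,2), of "{y. R < dist x y}"] J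
    by (simp add: min_dist_others_def)
qed

lemma dev_nearest_neighbor_le_sum:
  assumes nn: "is_nearest_neighbor M Xs x m N" and m: "2 \<le> m" and \<omega>: "\<omega> \<in> space M"
  shows "dev (N \<omega>) \<le> (\<Sum>i\<in>{1..m}.
    if dist x (Xs i \<omega>) \<le> min_dist_others m i \<omega> then dev (Xs i \<omega>) else 0)"
proof -
  obtain k where k: "k \<in> {1..m}" "N \<omega> = Xs k \<omega>"
    and min: "\<And>i. i \<in> {1..m} \<Longrightarrow> dist x (N \<omega>) \<le> dist x (Xs i \<omega>)"
    using nn \<omega> unfolding is_nearest_neighbor_def by blast
  have "(if k = 1 then 2 else 1) \<in> {1..m} - {k}"
    using k m by auto
  then have "dist x (Xs k \<omega>) \<le> min_dist_others m k \<omega>"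
    unfolding min_dist_others_def using min k by (subst Min_ge_iff) auto
  then have "dev (N \<omega>) =
      (if dist x (Xs k \<omega>) \<le> min_dist_others m k \<omega> then dev (Xs k \<omega>) else 0)"
    using k by simp
  also have "\<dots> \<le> (\<Sum>i\<in>{1..m}.
      if dist x (Xs i \<omega>) \<le> min_dist_others m i \<omega> then dev (Xs i \<omega>) else 0)"
    by (rule member_le_sum) (use k in \<open>auto simp: dev_nonneg\<close>)
  finally show ?thesis .
qed

lemma sum_strictly_nearest_le_1:
  "(\<Sum>i\<in>{1..m}. if dist x (Xs i \<omega>) < min_dist_others m i \<omega> then 1 else 0 :: real) \<le> 1"
proof -
  define S where "S = {i\<in>{1..m}. dist x (Xs i \<omega>) < min_dist_others m i \<omega>}"
  have "a = b" if "a \<in> S" "b \<in> S" for a b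
  proof (rule ccontr)
    assume "a \<noteq> b"
    then have "min_dist_others m a \<omega> \<le> dist x (Xs b \<omega>)" "min_dist_others m b \<omega> \<le> dist x (Xs a \<omega>)"
      using that unfolding min_dist_others_def S_def by (auto intro!: Min_le)
    with that show False
      by (auto simp: S_def)
  qed
  then have "card S \<le> 1"
    using card_le_Suc0_iff_eq[of S] by (auto simp: S_def)
  moreover have "{1..m} \<inter> {i. dist x (Xs i \<omega>) < min_dist_others m i \<omega>} = S"
    by (auto simp: S_def)
  ultimately show ?thesis
    by (simp add: sum.If_cases)
qed

lemma ball_prob_nonneg: "0 \<le> ball_prob t" and ball_prob_le_1: "ball_prob t \<le> 1"
  by (simp_all add: ball_prob_def)

lemma ball_prob_mono: "mono ball_prob"
  unfolding ball_prob_def mono_def by (intro allI impI law.finite_measure_mono) auto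

lemma cball_dev_nonneg: "0 \<le> cball_dev t"
  unfolding cball_dev_def by (intro Bochner_Integration.integral_nonneg) (simp add: dev_nonneg)

lemma integrable_P_dev: "integrable P (\<lambda>y. if dist x y \<le> t then dev y else 0)"
  by (rule law.integrable_bounded_real[where c=dev_bound])
    (auto simp: dev_nonneg dev_le_bound dev_bound_nonneg)

lemma cball_dev_le_bound: "cball_dev t \<le> dev_bound"
proof -
  have "cball_dev t \<le> (\<integral>y. dev_bound \<partial>P)"
    unfolding cball_dev_def
    by (intro integral_mono integrable_P_dev) (auto simp: dev_le_bound dev_bound_nonneg)
  then show ?thesis
    using law.prob_space by simp
qed

lemma cball_dev_nonpos: "t \<le> 0 \<Longrightarrow> cball_dev t = 0"
proof -
  assume "t \<le> 0"
  then have "(if dist x y \<le> t then dev y else 0) = 0" for y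
    by (metis dev_center dist_le_zero_iff order.trans)
  then show ?thesis by (simp add: cball_dev_def)
qed

lemma cball_dev_mono: "mono cball_dev"
  unfolding cball_dev_def mono_def
  by (intro allI impI integral_mono integrable_P_dev) (auto simp: dev_nonneg)

lemma ball_prob_measurable[measurable]: "ball_prob \<in> borel_measurable borel"
  and cball_dev_measurable[measurable]: "cball_dev \<in> borel_measurable borel"
  by (simp_all add: borel_measurable_mono ball_prob_mono cball_dev_mono)

lemma cball_prob_le_ball_prob:
  assumes "0 \<le> K" and sphere: "\<forall>t\<in>{0<..<R}. measure P (sphere x t) \<le> K * ball_prob t"
    and "0 < t"
  shows "cball_prob t \<le> (1 + K) * ball_prob t + indicator {R..} t"
proof (cases "t < R")
  case True
  have "measure P (ball x t \<union> sphere x t) = ball_prob t + measure P (sphere x t)"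
    unfolding ball_prob_def by (rule law.finite_measure_Union) auto
  moreover have "ball x t \<union> sphere x t = cball x t"
    by auto
  ultimately have "cball_prob t = ball_prob t + measure P (sphere x t)"
    by (simp add: cball_prob_def)
  with True sphere \<open>0 < t\<close> show ?thesis
    by (simp add: algebra_simps)
next
  case False
  have "cball_prob t \<le> 1" "0 \<le> (1 + K) * ball_prob t"
    using \<open>0 \<le> K\<close> by (simp_all add: cball_prob_def ball_prob_nonneg)
  with False show ?thesis
    by simp
qed

lemma cball_dev_le:
  assumes "0 \<le> eps" "0 \<le> K"
    and close: "\<forall>t\<in>{0<..r}. cball_dev t \<le> eps * cball_prob t"
    and sphere: "\<forall>t\<in>{0<..<R}. measure P (sphere x t) \<le> K * ball_prob t"
  shows "cball_dev t \<le> eps * (1 + K) * ball_prob t + eps * indicator {R..} t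
    + dev_bound * indicator {r<..} t"
proof -
  have rhs_nonneg: "0 \<le> eps * (1 + K) * ball_prob t + eps * indicator {R..} t"
    using assms(1,2) ball_prob_nonneg[of t] by simp
  consider "t \<le> 0" | "0 < t" "t \<le> r" | "r < t"
    by linarith
  then show ?thesis
  proof cases
    case 1
    then show ?thesis
      using rhs_nonneg dev_bound_nonneg by (simp add: cball_dev_nonpos)
  next
    case 2
    have "cball_dev t \<le> eps * cball_prob t"
      using close 2 by simp
    also have "\<dots> \<le> eps * ((1 + K) * ball_prob t + indicator {R..} t)"
      using cball_prob_le_ball_prob[OF assms(2) sphere 2(1)] assms(1) by (rule mult_left_mono)
    finally show ?thesis
      using 2 by (simp add: algebra_simps)
  qed (use rhs_nonneg cball_dev_le_bound[of t] in simp)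
qed

lemma expectation_ball_prob_min_dist_others:
  assumes "i \<in> {1..m}"
  shows "(\<integral>\<omega>. ball_prob (min_dist_others m i \<omega>) \<partial>M)
    = (\<integral>\<omega>. (if dist x (Xs i \<omega>) < min_dist_others m i \<omega> then 1 else 0) \<partial>M)"
proof -
  have "ball_prob t = (\<integral>y. indicator (ball x t) y \<partial>P)" for t
    by (simp add: ball_prob_def)
  also have "\<dots> t = (\<integral>y. (if dist x y < t then 1 else 0) \<partial>P)" for t
    by (rule Bochner_Integration.integral_cong) (auto simp: indicator_def)
  then show ?thesis
    using integral_Xs_min_dist_others[OF assms, of "\<lambda>(y, t). if dist x y < t then 1 else 0" 1]
    by (simp add: split_beta ball_prob_def)
qed

lemma sum_expectation_ball_prob_le_1:
  "(\<Sum>i\<in>{1..m}. \<integral>\<omega>. ball_prob (min_dist_others m i \<omega>) \<partial>M) \<le> 1"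
proof -
  let ?strict = "\<lambda>i \<omega>. if dist x (Xs i \<omega>) < min_dist_others m i \<omega> then 1 else 0 :: real"
  have int: "integrable M (?strict i)" for i
    by (rule integrable_bounded_real[where c=1]) auto
  have "(\<Sum>i\<in>{1..m}. \<integral>\<omega>. ball_prob (min_dist_others m i \<omega>) \<partial>M)
      = (\<integral>\<omega>. (\<Sum>i\<in>{1..m}. ?strict i \<omega>) \<partial>M)"
    using int by (simp add: expectation_ball_prob_min_dist_others)
  also have "\<dots> \<le> (\<integral>\<omega>. 1 \<partial>M)"
    using int sum_strictly_nearest_le_1 by (intro integral_mono integrable_sum) auto
  finally show ?thesis
    by (simp add: prob_space)
qed

lemma expectation_cball_dev_min_dist_others_le:
  assumes i: "i \<in> {1..m}" and m: "2 \<le> m" and "0 \<le> eps" "0 \<le> K"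
    and close: "\<forall>t\<in>{0<..r}. cball_dev t \<le> eps * cball_prob t"
    and sphere: "\<forall>t\<in>{0<..<R}. measure P (sphere x t) \<le> K * ball_prob t"
  shows "(\<integral>\<omega>. cball_dev (min_dist_others m i \<omega>) \<partial>M)
    \<le> eps * (1 + K) * (\<integral>\<omega>. ball_prob (min_dist_others m i \<omega>) \<partial>M)
      + eps * measure P {y. R \<le> dist x y} ^ (m - 1) + dev_bound * measure P {y. r < dist x y} ^ (m - 1)"
proof -
  let ?T = "min_dist_others m i"
  have int_ball: "integrable M (\<lambda>\<omega>. ball_prob (?T \<omega>))"
    by (rule integrable_bounded_real[where c=1]) (auto simp: ball_prob_nonneg ball_prob_le_1)
  have int_ind: "integrable M (\<lambda>\<omega>. indicator A (?T \<omega>) :: real)" if "A \<in> sets borel" for A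
    using that by (intro integrable_bounded_real[where c=1]) (auto simp: indicator_def)
  have ind: "(\<integral>\<omega>. (indicator A (?T \<omega>) :: real) \<partial>M) = prob {\<omega>\<in>space M. ?T \<omega> \<in> A}"
    if "A \<in> sets borel" for A
  proof -
    have "(\<integral>\<omega>. (indicator A (?T \<omega>) :: real) \<partial>M)
        = (\<integral>\<omega>. indicator {\<omega>\<in>space M. ?T \<omega> \<in> A} \<omega> \<partial>M)"
      by (rule Bochner_Integration.integral_cong) (auto simp: indicator_def)
    then show ?thesis
      by (simp add: Int_absorb2 subset_eq)
  qed
  have "(\<integral>\<omega>. cball_dev (?T \<omega>) \<partial>M) \<le> (\<integral>\<omega>. eps * (1 + K) * ball_prob (?T \<omega>)
      + eps * indicator {R..} (?T \<omega>) + dev_bound * indicator {r<..} (?T \<omega>) \<partial>M)"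
    using cball_dev_le[OF assms(3,4) close sphere] int_ball int_ind
    by (intro integral_mono integrable_bounded_real[where f="\<lambda>\<omega>. cball_dev (?T \<omega>)" and c=dev_bound])
      (auto simp: cball_dev_nonneg cball_dev_le_bound)
  also have "\<dots> = eps * (1 + K) * (\<integral>\<omega>. ball_prob (?T \<omega>) \<partial>M)
      + eps * prob {\<omega>\<in>space M. R \<le> ?T \<omega>} + dev_bound * prob {\<omega>\<in>space M. r < ?T \<omega>}"
    using int_ball int_ind by (simp add: ind)
  finally show ?thesis
    by (simp add: prob_min_dist_others[OF i m])
qed

lemma expectation_dev_nearest_neighbor_le:
  assumes nn: "is_nearest_neighbor M Xs x m N" and m: "2 \<le> m" and "0 \<le> eps" "0 \<le> K"
    and close: "\<forall>t\<in>{0<..r}. cball_dev t \<le> eps * cball_prob t"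
    and sphere: "\<forall>t\<in>{0<..<R}. measure P (sphere x t) \<le> K * ball_prob t"
  shows "(\<integral>\<omega>. dev (N \<omega>) \<partial>M) \<le> eps * (1 + K)
    + eps * (m * measure P {y. R \<le> dist x y} ^ (m - 1))
    + dev_bound * (m * measure P {y. r < dist x y} ^ (m - 1))"
proof -
  let ?T = "min_dist_others m"
  define \<psi> where "\<psi> = (\<lambda>(y, t). if dist x y \<le> t then dev y else 0)"
  have \<psi>_measurable[measurable]: "\<psi> \<in> borel_measurable (borel \<Otimes>\<^sub>M borel)"
    unfolding \<psi>_def by measurable
  have \<psi>_bound: "\<bar>\<psi> z\<bar> \<le> dev_bound" for z
    by (auto simp: \<psi>_def split_beta dev_nonneg dev_le_bound dev_bound_nonneg)
  have int: "integrable M (\<lambda>\<omega>. \<psi> (Xs i \<omega>, ?T i \<omega>))" for i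
    by (rule integrable_bounded_real[OF _ \<psi>_bound]) simp
  have "integrable M (\<lambda>\<omega>. dev (N \<omega>))"
    using nn by (intro integrable_bounded_real[where c=dev_bound])
      (auto simp: is_nearest_neighbor_def dev_nonneg dev_le_bound)
  then have "(\<integral>\<omega>. dev (N \<omega>) \<partial>M) \<le> (\<integral>\<omega>. (\<Sum>i\<in>{1..m}. \<psi> (Xs i \<omega>, ?T i \<omega>)) \<partial>M)"
    using dev_nearest_neighbor_le_sum[OF nn m] int
    by (intro integral_mono integrable_sum) (auto simp: \<psi>_def)
  also have "\<dots> = (\<Sum>i\<in>{1..m}. \<integral>\<omega>. cball_dev (?T i \<omega>) \<partial>M)"
    using int integral_Xs_min_dist_others[OF _ \<psi>_measurable \<psi>_bound]
    by (simp add: \<psi>_def cball_dev_def)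
  also have "\<dots> \<le> (\<Sum>i\<in>{1..m}. eps * (1 + K) * (\<integral>\<omega>. ball_prob (?T i \<omega>) \<partial>M)
      + eps * measure P {y. R \<le> dist x y} ^ (m - 1) + dev_bound * measure P {y. r < dist x y} ^ (m - 1))"
    using expectation_cball_dev_min_dist_others_le[OF _ m assms(3,4) close sphere]
    by (intro sum_mono) simp
  also have "\<dots> = eps * (1 + K) * (\<Sum>i\<in>{1..m}. \<integral>\<omega>. ball_prob (?T i \<omega>) \<partial>M)
      + eps * (m * measure P {y. R \<le> dist x y} ^ (m - 1))
      + dev_bound * (m * measure P {y. r < dist x y} ^ (m - 1))"
    by (simp add: sum.distrib sum_distrib_left)
  also have "\<dots> \<le> eps * (1 + K) + eps * (m * measure P {y. R \<le> dist x y} ^ (m - 1))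
      + dev_bound * (m * measure P {y. r < dist x y} ^ (m - 1))"
    using sum_expectation_ball_prob_le_1[of m] assms(3,4) by (simp add: mult_left_le)
  finally show ?thesis .
qed

lemma lebesgue_point_iff_cball_dev:
  "lebesgue_point M (Xs 0) \<eta> x \<longleftrightarrow> ((\<lambda>t. cball_dev t / cball_prob t) \<longlongrightarrow> 0) (at_right 0)"
proof -
  have "(\<integral>\<omega>. indicator (cball x t) (Xs 0 \<omega>) * \<bar>\<eta> (Xs 0 \<omega>) - \<eta> x\<bar> \<partial>M)
      = (\<integral>y. indicator (cball x t) y * dev y \<partial>P)" for t
    unfolding P_def dev_def
    by (rule integral_distr[symmetric]) simp_all
  also have "\<dots> t = cball_dev t" for t
    unfolding cball_dev_def by (rule Bochner_Integration.integral_cong) (auto simp: indicator_def)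
  finally show ?thesis
    by (simp add: lebesgue_point_def cball_prob_def flip: P_def)
qed

lemma cball_dev_eventually_le:
  assumes "lebesgue_point M (Xs 0) \<eta> x" "in_support P x" "0 < eps"
  obtains r where "0 < r" "\<forall>t\<in>{0<..r}. cball_dev t \<le> eps * cball_prob t"
proof -
  have "\<forall>\<^sub>F t in at_right 0. cball_dev t / cball_prob t < eps"
    using assms(1,3) unfolding lebesgue_point_iff_cball_dev by (rule order_tendstoD(2))
  then obtain b where b: "0 < b" "\<And>t. 0 < t \<Longrightarrow> t < b \<Longrightarrow> cball_dev t / cball_prob t < eps"
    unfolding eventually_at_right_field by auto
  have "cball_dev t \<le> eps * cball_prob t" if "0 < t" "t \<le> b / 2" for t
  proof -
    have "0 < cball_prob t"
      using assms(2) that(1) by (simp add: in_support_def cball_prob_def)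
    with b(2)[of t] that show ?thesis
      by (simp add: pos_divide_less_eq)
  qed
  with b(1) show thesis
    by (intro that[of "b / 2"]) auto
qed

lemma expectation_dev_nearest_neighbor_eventually_le:
  assumes support: "in_support P x"
    and sphere: "\<exists>K\<ge>0. \<exists>R>0. \<forall>t\<in>{0<..<R}. measure P (sphere x t) \<le> K * measure P (ball x t)"
    and lebesgue: "lebesgue_point M (Xs 0) \<eta> x"
    and nn: "\<And>m. 1 \<le> m \<Longrightarrow> is_nearest_neighbor M Xs x m (NN m)"
    and "0 < e"
  shows "\<forall>\<^sub>F m in sequentially. (\<integral>\<omega>. dev (NN m \<omega>) \<partial>M) \<le> e"
proof -
  obtain K R where K: "0 \<le> K" and "0 < R"
    and sphere: "\<forall>t\<in>{0<..<R}. measure P (sphere x t) \<le> K * ball_prob t"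
    using sphere unfolding ball_prob_def by auto
  define eps where "eps = e / (K + 3)"
  have eps: "0 < eps" "eps * (K + 3) = e"
    using \<open>0 < e\<close> K by (simp_all add: eps_def)
  obtain r where "0 < r" and close: "\<forall>t\<in>{0<..r}. cball_dev t \<le> eps * cball_prob t"
    using cball_dev_eventually_le[OF lebesgue support eps(1)] by blast
  define qR where "qR = measure P {y. R \<le> dist x y}"
  define qr where "qr = measure P {y. r < dist x y}"
  have "qR < 1" "qr \<le> measure P {y. r \<le> dist x y}" "measure P {y. r \<le> dist x y} < 1"
    using in_support_measure_outside_ball_less_1[OF law.prob_space_axioms _ support]
      \<open>0 < R\<close> \<open>0 < r\<close> unfolding qR_def qr_def
    by (auto intro!: law.finite_measure_mono)
  moreover have "0 \<le> qR" "0 \<le> qr"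
    by (simp_all add: qR_def qr_def)
  ultimately have far: "(\<lambda>m. real m * qR ^ (m - 1)) \<longlonglongrightarrow> 0"
    "(\<lambda>m. real m * qr ^ (m - 1)) \<longlonglongrightarrow> 0"
    using real_times_power_tendsto_zero[of qR] real_times_power_tendsto_zero[of qr] by simp_all
  have "\<forall>\<^sub>F m in sequentially. real m * qR ^ (m - 1) < 1"
    using far(1) by (rule order_tendstoD(2)) simp
  moreover have "\<forall>\<^sub>F m in sequentially. dev_bound * (real m * qr ^ (m - 1)) < eps"
    using tendsto_mult_right_zero[OF far(2)] eps(1) by (rule order_tendstoD(2))
  moreover have "\<forall>\<^sub>F m in sequentially. 2 \<le> m"
    by (rule eventually_ge_at_top)
  ultimately show ?thesis
  proof eventually_elim
    case (elim m)
    have "(\<integral>\<omega>. dev (NN m \<omega>) \<partial>M) \<le> eps * (1 + K) + eps * (m * qR ^ (m - 1))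
        + dev_bound * (m * qr ^ (m - 1))"
      unfolding qR_def qr_def using elim(3) eps(1) K close sphere
      by (intro expectation_dev_nearest_neighbor_le nn) simp_all
    also have "\<dots> \<le> eps * (1 + K) + eps + eps"
    proof -
      have "eps * (m * qR ^ (m - 1)) \<le> eps"
        using elim(1) eps(1) by (intro mult_left_le) simp_all
      then show ?thesis
        using elim(2) by simp
    qed
    finally show ?case
      using eps(2) by (simp add: algebra_simps)
  qed
qed

end

theorem mainTheorem8:
  fixes M :: "'w measure" and Xs :: "nat \<Rightarrow> 'w \<Rightarrow> 'a::metric_space"
    and \<eta> :: "'a \<Rightarrow> real" and x :: 'a and NN :: "nat \<Rightarrow> 'w \<Rightarrow> 'a"
  assumes "prob_space M"
    and "\<And>i. Xs i \<in> borel_measurable M"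
    and "prob_space.indep_vars M (\<lambda>_. borel) Xs UNIV"
    and "\<And>i. distr M borel (Xs i) = distr M borel (Xs 0)"
    and "\<eta> \<in> borel_measurable borel"
    and "bounded (range \<eta>)"
    and "in_support (distr M borel (Xs 0)) x"
    and "\<And>m. m \<ge> 1 \<Longrightarrow> is_nearest_neighbor M Xs x m (NN m)"
    and "\<exists>K\<ge>0. \<exists>R>0. \<forall>r\<in>{0<..<R}.
           measure (distr M borel (Xs 0)) (sphere x r) \<le> K * measure (distr M borel (Xs 0)) (ball x r)"
    and "lebesgue_point M (Xs 0) \<eta> x"
  shows "(\<lambda>m. \<integral>\<omega>. \<bar>\<eta> (NN m \<omega>) - \<eta> x\<bar> \<partial>M) \<longlonglongrightarrow> 0"
proof -
  interpret nn_sample M Xs \<eta> x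
    using assms(1-6) by (simp add: nn_sample_def nn_sample_axioms_def)
  have nonneg: "0 \<le> (\<integral>\<omega>. dev (NN m \<omega>) \<partial>M)" for m
    by (intro Bochner_Integration.integral_nonneg dev_nonneg)
  have "(\<lambda>m. \<integral>\<omega>. dev (NN m \<omega>) \<partial>M) \<longlonglongrightarrow> 0"
  proof (rule order_tendstoI)
    fix a :: real
    assume "a < 0"
    then show "\<forall>\<^sub>F m in sequentially. a < (\<integral>\<omega>. dev (NN m \<omega>) \<partial>M)"
      using nonneg by (auto intro: always_eventually less_le_trans)
  next
    fix a :: real
    assume "0 < a"
    with assms(7-10) have "\<forall>\<^sub>F m in sequentially. (\<integral>\<omega>. dev (NN m \<omega>) \<partial>M) \<le> a / 2"
      by (intro expectation_dev_nearest_neighbor_eventually_le) (simp_all flip: P_def)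
    then show "\<forall>\<^sub>F m in sequentially. (\<integral>\<omega>. dev (NN m \<omega>) \<partial>M) < a"
      by eventually_elim (use \<open>0 < a\<close> in simp)
  qed
  then show ?thesis
    by (simp add: dev_def)
qed

end
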